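(* Let $f:2^V\to\mathbb{Z}_{\ge0}$ be a connectivity function and $C,W\subseteq V$. If $W$ disorients $C$ and $f(C)<f(W)/2$, then $(C, V\setminus C, \emptyset)$ is a $W$-improvement.
   Context: A connectivity function $f:2^V\to\mathbb{Z}_{\ge0}$ ($V$ finite) satisfies $f(\emptyset)=0$, $f(X)=f(V\setminus X)$, and $f(X\cup Y)+f(X\cap Y)\le f(X)+f(Y)$. Write $\overline{X}=V\setminus X$. The set $W$ directly orients $C$ if $f(C\cap W)<f(\overline{C}\cap W)$ and $f(C\cap\overline{W})<f(\overline{C}\cap\overline{W})$; $W$ inversely orients $C$ if it directly orients $\overline{C}$; $W$ disorients $C$ if it neither directly nor inversely orients $C$. For $W\subseteq V$, a $W$-improvement is a tripartition $(C_1,C_2,C_3)$ of $V$ (pairwise disjoint, possibly empty, union $V$) with $f(C_i)<f(W)/2$, $f(C_i\cap W)<f(W)$, $f(C_i\cap\overline{W})<f(W)$ for each $i$. *)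

theory Defs
  imports Main
begin

definition connectivity_function :: "'a set \<Rightarrow> ('a set \<Rightarrow> nat) \<Rightarrow> bool" where
  "connectivity_function V f \<longleftrightarrow>
     f {} = 0 \<and>
     (\<forall>X. X \<subseteq> V \<longrightarrow> f X = f (V - X)) \<and>
     (\<forall>X Y. X \<subseteq> V \<longrightarrow> Y \<subseteq> V \<longrightarrow> f (X \<union> Y) + f (X \<inter> Y) \<le> f X + f Y)"

definition directly_orients :: "'a set \<Rightarrow> ('a set \<Rightarrow> nat) \<Rightarrow> 'a set \<Rightarrow> 'a set \<Rightarrow> bool" where
  "directly_orients V f W C \<longleftrightarrow>
     f (C \<inter> W) < f ((V - C) \<inter> W) \<and> f (C \<inter> (V - W)) < f ((V - C) \<inter> (V - W))"

definition inversely_orients :: "'a set \<Rightarrow> ('a set \<Rightarrow> nat) \<Rightarrow> 'a set \<Rightarrow> 'a set \<Rightarrow> bool" where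
  "inversely_orients V f W C \<longleftrightarrow> directly_orients V f W (V - C)"

definition disorients :: "'a set \<Rightarrow> ('a set \<Rightarrow> nat) \<Rightarrow> 'a set \<Rightarrow> 'a set \<Rightarrow> bool" where
  "disorients V f W C \<longleftrightarrow> \<not> directly_orients V f W C \<and> \<not> inversely_orients V f W C"

text \<open>A W-improvement: tripartition (C1,C2,C3) of V. The bound f(Ci) < f(W)/2 is
  written as 2 * f Ci < f W (exact over the integers).\<close>
definition improvement :: "'a set \<Rightarrow> ('a set \<Rightarrow> nat) \<Rightarrow> 'a set \<Rightarrow> 'a set \<times> 'a set \<times> 'a set \<Rightarrow> bool" where
  "improvement V f W P \<longleftrightarrow> (case P of (C1, C2, C3) \<Rightarrow>
     C1 \<union> C2 \<union> C3 = V \<and> C1 \<inter> C2 = {} \<and> C1 \<inter> C3 = {} \<and> C2 \<inter> C3 = {} \<and>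
     (\<forall>Ci \<in> {C1, C2, C3}.
        2 * f Ci < f W \<and> f (Ci \<inter> W) < f W \<and> f (Ci \<inter> (V - W)) < f W))"

end

theory Submission
  imports Defs
begin

text \<open>Write \<open>a, b, x, y\<close> for the values of \<open>f\<close> on the four corners \<open>C \<inter> W\<close>, \<open>C\<^sup>c \<inter> W\<close>,
  \<open>C \<inter> W\<^sup>c\<close>, \<open>C\<^sup>c \<inter> W\<^sup>c\<close>. Submodularity and symmetry give \<open>a + y \<le> f C + f W\<close> and
  \<open>x + b \<le> f C + f W\<close>, subadditivity gives \<open>f W \<le> x + y\<close>. If the corner \<open>a\<close> reached \<open>f W\<close>,
  these would force \<open>y \<le> f C < x\<close> and \<open>b \<le> 2 f C < a\<close>, i.e. \<open>W\<close> would orient \<open>C\<close> inversely.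
  Replacing \<open>C\<close> and \<open>W\<close> by their complements moves this argument to the other three corners.\<close>

lemma connectivity_function_compl:
  assumes "connectivity_function V f" "X \<subseteq> V"
  shows "f (V - X) = f X"
  using assms unfolding connectivity_function_def by metis

lemma connectivity_function_empty:
  assumes "connectivity_function V f"
  shows "f {} = 0"
  using assms unfolding connectivity_function_def by simp

lemma connectivity_function_submodular:
  assumes "connectivity_function V f" "X \<subseteq> V" "Y \<subseteq> V"
  shows "f (X \<union> Y) + f (X \<inter> Y) \<le> f X + f Y"
  using assms unfolding connectivity_function_def by blast

lemma connectivity_function_subadditive:
  assumes "connectivity_function V f" "X \<subseteq> V" "Y \<subseteq> V" "X \<inter> Y = {}"
  shows "f (X \<union> Y) \<le> f X + f Y"
  using connectivity_function_submodular[OF assms(1-3)] connectivity_function_empty[OF assms(1)]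
    assms(4) by simp

lemma connectivity_function_inter_compl_inter_le:
  assumes "connectivity_function V f" "X \<subseteq> V" "Y \<subseteq> V"
  shows "f (X \<inter> Y) + f ((V - X) \<inter> (V - Y)) \<le> f X + f Y"
proof -
  have "f ((V - X) \<inter> (V - Y)) = f (X \<union> Y)"
    using connectivity_function_compl[OF assms(1), of "X \<union> Y"] assms(2,3)
    by (simp add: Diff_Un)
  then show ?thesis
    using connectivity_function_submodular[OF assms] by simp
qed

lemma directly_orients_compl_orienter:
  assumes "W \<subseteq> V"
  shows "directly_orients V f (V - W) C \<longleftrightarrow> directly_orients V f W C"
proof -
  have "V - (V - W) = W"
    using assms by blast
  then show ?thesis
    unfolding directly_orients_def by auto
qed

lemma disorients_compl_orienter:
  assumes "W \<subseteq> V"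
  shows "disorients V f (V - W) C \<longleftrightarrow> disorients V f W C"
  using assms
  by (simp add: disorients_def inversely_orients_def directly_orients_compl_orienter)

lemma disorients_compl:
  assumes "C \<subseteq> V"
  shows "disorients V f W (V - C) \<longleftrightarrow> disorients V f W C"
proof -
  have "V - (V - C) = C"
    using assms by blast
  then show ?thesis
    unfolding disorients_def inversely_orients_def by auto
qed

lemma disorients_inter_less:
  assumes cf: "connectivity_function V f" and "C \<subseteq> V" "W \<subseteq> V"
    and dis: "disorients V f W C" and small: "2 * f C < f W"
  shows "f (C \<inter> W) < f W"
proof (rule ccontr)
  assume "\<not> f (C \<inter> W) < f W"
  then have large: "f W \<le> f (C \<inter> W)" by simp
  have "f (C \<inter> W) + f ((V - C) \<inter> (V - W)) \<le> f C + f W"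
    using connectivity_function_inter_compl_inter_le[OF cf] assms(2,3) by blast
  moreover have "f (C \<inter> (V - W)) + f ((V - C) \<inter> W) \<le> f C + f W"
  proof -
    have "(V - C) \<inter> (V - (V - W)) = (V - C) \<inter> W"
      using assms(3) by blast
    then show ?thesis
      using connectivity_function_inter_compl_inter_le[OF cf, of C "V - W"] assms(2)
        connectivity_function_compl[OF cf assms(3)] by simp
  qed
  moreover have "f W \<le> f (C \<inter> (V - W)) + f ((V - C) \<inter> (V - W))"
  proof -
    have "(C \<inter> (V - W)) \<union> ((V - C) \<inter> (V - W)) = V - W"
      using assms(2) by blast
    then show ?thesis
      using connectivity_function_subadditive[OF cf, of "C \<inter> (V - W)" "(V - C) \<inter> (V - W)"]
        connectivity_function_compl[OF cf assms(3)] by auto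
  qed
  ultimately have "f ((V - C) \<inter> W) < f (C \<inter> W) \<and> f ((V - C) \<inter> (V - W)) < f (C \<inter> (V - W))"
    using large small by linarith
  then have "inversely_orients V f W C"
    using assms(2) by (simp add: inversely_orients_def directly_orients_def double_diff)
  with dis show False
    unfolding disorients_def by blast
qed

theorem lemma3:
  fixes V :: "'a set" and f :: "'a set \<Rightarrow> nat" and C W :: "'a set"
  assumes "finite V"
    and "connectivity_function V f"
    and "C \<subseteq> V" and "W \<subseteq> V"
    and "disorients V f W C"
    and "2 * f C < f W"
  shows "improvement V f W (C, V - C, {})"
proof -
  note cf = assms(2)
  have compl_C: "f (V - C) = f C" and compl_W: "f (V - W) = f W"
    using connectivity_function_compl[OF cf] assms(3,4) by auto
  have "f {} = 0"
    using connectivity_function_empty[OF cf] .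
  moreover have "f (D \<inter> U) < f W" if "D \<in> {C, V - C}" "U \<in> {W, V - W}" for D U
  proof -
    have "D \<subseteq> V" "U \<subseteq> V" "f D = f C" "f U = f W"
      using that assms(3,4) compl_C compl_W by auto
    moreover have "disorients V f U D"
      using that assms(3-5) by (auto simp: disorients_compl disorients_compl_orienter)
    ultimately show ?thesis
      using disorients_inter_less[OF cf] assms(6) by metis
  qed
  ultimately show ?thesis
    using assms(3,6) compl_C unfolding improvement_def by auto
qed

end
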